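(* Let $w\ge 1$ and $n\ge 1$ be integers and let $C\le \mathbb{F}_2^n$ be a linear subspace spanned by vectors of Hamming weight at most $w$, such that $\bigcup_{\boldsymbol{c}\in C}\operatorname{supp}(\boldsymbol{c})=[n]$. Then for every $0\le\lambda\le 1$, \[ Q_C(\lambda)\le\left(\frac{(1+\lambda)^w}{1+\lambda^w}\right)^{n/w}. \] Moreover, if $w=3$ then $Q_C(\lambda)\le (1+3\lambda)^{n/3}$ for every $0\le\lambda\le1$, and if $w=4$ then $Q_C(\lambda)\le (1+4\lambda+6\lambda^2)^{n/4}$ for every $0\le\lambda\le 1$.
   Context: For a finite set $U$ and a linear subspace $C\le\mathbb{F}_2^U$, the weight $w_{\mathrm H}(A)$ of a coset $A\in\mathbb{F}_2^U/C$ is the minimum Hamming weight of a vector in $A$. The coset-weight generating function of $C$ is $Q_C(\lambda)=\sum_{A\in\mathbb{F}_2^U/C}\lambda^{w_{\mathrm H}(A)}$ (with the convention $0^0=1$). For $\boldsymbol{c}\in\mathbb{F}_2^n$, $\operatorname{supp}(\boldsymbol{c})=\{i\in[n]:c_i=1\}$, and $[n]=\{1,\dots,n\}$. *)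

theory Defs
  imports "HOL-Analysis.Analysis" "HOL-Library.Z2"
begin

text \<open>Vectors of F_2^n are modelled as elements of bit ^ 'n for a finite index
type 'n with CARD('n) = n; the index set [n] is UNIV :: 'n set.\<close>

definition supp :: "bit ^ 'n \<Rightarrow> 'n set" where
  "supp x = {i. x $ i \<noteq> 0}"

definition hweight :: "bit ^ 'n::finite \<Rightarrow> nat" where
  "hweight x = card (supp x)"

definition F2span :: "(bit ^ 'n) set \<Rightarrow> (bit ^ 'n) set" where
  "F2span G = module.span (*s) G"

definition cosets :: "(bit ^ 'n) set \<Rightarrow> (bit ^ 'n) set set" where
  "cosets C = {(\<lambda>c. x + c) ` C | x. True}"

definition coset_weight :: "(bit ^ 'n::finite) set \<Rightarrow> nat" where
  "coset_weight A = Min (hweight ` A)"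

definition Q :: "(bit ^ 'n::finite) set \<Rightarrow> real \<Rightarrow> real" where
  "Q C lam = (\<Sum>A\<in>cosets C. lam ^ coset_weight A)"

end

theory Submission
  imports Defs
begin

text \<open>
  Let \<open>W(lam)\<close> be the weight enumerator, the sum of \<open>lam ^ hweight c\<close> over the code words,
  and note that \<open>card C * Q C lam\<close> is the sum of \<open>lam ^ w(y + C)\<close> over all vectors \<open>y\<close>.

  General bound: if \<open>y + c0\<close> is a leader of \<open>y + C\<close>, then
  \<open>lam ^ w(y + C) * lam ^ hweight c \<le> lam ^ hweight (y + c0 + c)\<close>, and summing over \<open>y\<close>
  and \<open>c\<close> gives \<open>Q C lam * W(lam) \<le> (1 + lam) ^ n\<close>. A generator outside the span of the
  previous ones multiplies \<open>W\<close> by at least \<open>1 + lam ^ w\<close> and enlarges the support by at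
  most \<open>w\<close> coordinates, so \<open>W(lam) \<ge> (1 + lam ^ w) ^ (n / w)\<close>.

  Weights 3 and 4: add the generators one by one. If \<open>g = h + 1\<^sub>P\<close> covers the \<open>m\<close>
  new coordinates \<open>P\<close>, then for \<open>u\<close> off \<open>P\<close> and \<open>v\<close> on \<open>P\<close> the new coset weight
  of \<open>u + v\<close> is \<open>min (a + |v|) (b + m - |v|)\<close>, where \<open>a, b\<close> are the old coset weights
  of \<open>u, u + h\<close> and \<open>|a - b| \<le> w - m\<close>. Summing over \<open>v\<close> gives a binomial sum bounded
  by \<open>beta ^ m * (lam ^ a + lam ^ b)\<close>, where \<open>beta ^ w\<close> is \<open>1 + 3 lam\<close> resp.
  \<open>1 + 4 lam + 6 lam\<^sup>2\<close>. So every covered coordinate costs a factor \<open>beta\<close> instead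
  of \<open>1 + lam\<close>, and \<open>Q C lam \<le> beta ^ n\<close>.
\<close>

section \<open>Binary vectors and their spans\<close>

instance bit :: finite
proof
  have "(UNIV :: bit set) = {0, 1}"
    by (auto intro: bit.exhaust)
  then show "finite (UNIV :: bit set)"
    by (metis finite.emptyI finite.insertI)
qed

lemma bit_add_self [simp]: "(a :: bit) + a = 0"
  by (cases a) simp_all

lemma vec_bit_add_self [simp]: "(x :: bit ^ 'n) + x = 0"
  by (simp add: vec_eq_iff)

lemma vec_bit_2_eq_0 [simp]: "(2 :: bit ^ 'n) = 0"
  by (simp add: vec_eq_iff)

lemma vec_bit_add_cancel_left [simp]: "(x :: bit ^ 'n) + (x + y) = y"
  by (simp flip: add.assoc)

lemma supp_0 [simp]: "supp (0 :: bit ^ 'n) = {}"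
  by (simp add: supp_def)

lemma hweight_0 [simp]: "hweight (0 :: bit ^ 'n::finite) = 0"
  by (simp add: hweight_def)

lemma supp_add_subset: "supp ((x :: bit ^ 'n) + y) \<subseteq> supp x \<union> supp y"
  by (auto simp: supp_def)

lemma hweight_add_le: "hweight ((x :: bit ^ 'n::finite) + y) \<le> hweight x + hweight y"
  unfolding hweight_def
  by (meson card_Un_le card_mono finite le_trans supp_add_subset)

lemma hweight_add_disjoint:
  fixes x y :: "bit ^ 'n::finite"
  assumes "supp x \<inter> supp y = {}"
  shows "hweight (x + y) = hweight x + hweight y"
proof -
  have "supp (x + y) = supp x \<union> supp y"
    using assms by (auto simp: supp_def)
  then show ?thesis
    using assms by (simp add: hweight_def card_Un_disjoint)
qed

definition vecs_on :: "'n set \<Rightarrow> (bit ^ 'n) set" where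
  "vecs_on P = {v. supp v \<subseteq> P}"

definition ones_on :: "'n set \<Rightarrow> bit ^ 'n" where
  "ones_on P = (\<chi> i. if i \<in> P then 1 else 0)"

lemma supp_ones_on [simp]: "supp (ones_on P) = P"
  by (auto simp: supp_def ones_on_def)

lemma hweight_ones_on [simp]: "hweight (ones_on P :: bit ^ 'n::finite) = card P"
  by (simp add: hweight_def)

lemma vecs_on_UNIV [simp]: "vecs_on UNIV = UNIV"
  by (simp add: vecs_on_def)

lemma bij_betw_supp_vecs_on: "bij_betw supp (vecs_on P) (Pow P)"
proof (rule bij_betw_byWitness[where f' = ones_on])
  show "\<forall>v\<in>vecs_on P. ones_on (supp v) = v"
    by (auto simp: vecs_on_def ones_on_def supp_def vec_eq_iff)
qed (auto simp: vecs_on_def)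

lemma sum_vecs_on_hweight:
  fixes P :: "'n::finite set" and f :: "nat \<Rightarrow> real"
  shows "(\<Sum>v\<in>vecs_on P. f (hweight v)) = (\<Sum>j\<le>card P. real (card P choose j) * f j)"
proof -
  have "(\<Sum>v\<in>vecs_on P. f (hweight v)) = (\<Sum>S\<in>Pow P. f (card S))"
    unfolding hweight_def by (rule sum.reindex_bij_betw[OF bij_betw_supp_vecs_on])
  also have "\<dots> = (\<Sum>j\<le>card P. \<Sum>S\<in>{S\<in>Pow P. card S = j}. f (card S))"
    by (rule sum.group[symmetric]) (auto intro: card_mono)
  also have "\<dots> = (\<Sum>j\<le>card P. real (card P choose j) * f j)"
  proof (rule sum.cong[OF refl])
    fix j
    have "{S\<in>Pow P. card S = j} = {S. S \<subseteq> P \<and> card S = j}"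
      by auto
    then show "(\<Sum>S\<in>{S\<in>Pow P. card S = j}. f (card S)) = real (card P choose j) * f j"
      by (simp add: n_subsets)
  qed
  finally show ?thesis .
qed

lemma sum_vecs_on_pow_hweight:
  fixes P :: "'n::finite set"
  shows "(\<Sum>v\<in>vecs_on P. lam ^ hweight v) = (1 + lam :: real) ^ card P"
  unfolding sum_vecs_on_hweight using binomial_ring[of lam 1 "card P"] by (simp add: add.commute)

lemma sum_UNIV_split_vecs_on:
  fixes P :: "'n::finite set" and f :: "bit ^ 'n \<Rightarrow> 'a::comm_monoid_add"
  shows "(\<Sum>y\<in>UNIV. f y) = (\<Sum>u\<in>vecs_on (- P). \<Sum>v\<in>vecs_on P. f (u + v))"
proof -
  let ?restrict = "\<lambda>Q y. \<chi> i. if i \<in> Q then y $ i else 0"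
  have "?restrict (- P) y + ?restrict P y = y" for y :: "bit ^ 'n"
    by (simp add: vec_eq_iff)
  moreover have "?restrict (- P) (u + v) = u" "?restrict P (u + v) = v"
    if "u \<in> vecs_on (- P)" "v \<in> vecs_on P" for u v
    using that by (auto simp: vecs_on_def supp_def vec_eq_iff subset_iff)
  ultimately have "(\<Sum>y\<in>UNIV. f y) = (\<Sum>(u, v)\<in>vecs_on (- P) \<times> vecs_on P. f (u + v))"
    by (intro sum.reindex_bij_witness[of _ "\<lambda>(u, v). u + v" "\<lambda>y. (?restrict (- P) y, ?restrict P y)"])
       (auto simp: vecs_on_def supp_def)
  then show ?thesis
    by (simp add: sum.cartesian_product)
qed

lemma add_vecs_on: "u \<in> vecs_on P \<Longrightarrow> v \<in> vecs_on P \<Longrightarrow> u + v \<in> vecs_on P"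
  using supp_add_subset unfolding vecs_on_def by blast

lemma hweight_add_vecs_on:
  fixes u v :: "bit ^ 'n::finite"
  assumes "u \<in> vecs_on (- P)" and "v \<in> vecs_on P"
  shows "hweight (u + v) = hweight u + hweight v"
  using assms by (intro hweight_add_disjoint) (auto simp: vecs_on_def)

lemma hweight_add_ones_on:
  fixes v :: "bit ^ 'n::finite"
  assumes "v \<in> vecs_on P"
  shows "hweight (v + ones_on P) = card P - hweight v"
proof -
  have "supp (v + ones_on P) = P - supp v"
    using assms by (auto simp: vecs_on_def supp_def ones_on_def)
  then show ?thesis
    using assms by (simp add: hweight_def card_Diff_subset vecs_on_def)
qed

lemma subspace_F2span: "vec.subspace (F2span G)"
  unfolding F2span_def by (rule vec.subspace_span)

lemma F2span_nonempty: "F2span G \<noteq> {}"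
  using vec.subspace_0[OF subspace_F2span] by blast

lemma F2span_base: "g \<in> G \<Longrightarrow> g \<in> F2span G"
  unfolding F2span_def by (rule vec.span_base)

lemma F2span_empty: "F2span {} = {0}"
  unfolding F2span_def by (rule vec.span_empty)

lemma F2span_insert: "F2span (insert g F) = F2span F \<union> (+) g ` F2span F"
proof -
  have "x \<in> F2span (insert g F) \<longleftrightarrow> x \<in> F2span F \<or> x + g \<in> F2span F" for x
  proof -
    have "x - k *s g \<in> {x, x + g}" for k :: bit
      by (cases k) simp_all
    moreover have "x - 0 *s g = x" "x - 1 *s g = x + g"
      by simp_all
    ultimately show ?thesis
      unfolding F2span_def vec.span_breakdown_eq by (metis insertE singletonD)
  qed
  moreover have "x + g \<in> F2span F \<longleftrightarrow> x \<in> (+) g ` F2span F" for x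
  proof
    show "x + g \<in> F2span F \<Longrightarrow> x \<in> (+) g ` F2span F"
      by (rule image_eqI[of _ _ "x + g"]) (simp_all add: add.commute)
  qed (auto simp: add.commute)
  ultimately show ?thesis
    by blast
qed

lemma F2span_insert_redundant: "g \<in> F2span F \<Longrightarrow> F2span (insert g F) = F2span F"
  unfolding F2span_def by (rule vec.span_redundant)

lemma sum_F2span_insert:
  assumes "g \<notin> F2span F"
  shows "(\<Sum>x\<in>F2span (insert g F). f x) = (\<Sum>x\<in>F2span F. f x) + (\<Sum>x\<in>F2span F. f (g + x))"
proof -
  have "g + c \<notin> F2span F" if "c \<in> F2span F" for c
    using assms vec.subspace_add[OF subspace_F2span, of "g + c" _ c] that by (auto simp: add.assoc)
  then have "(\<Sum>x\<in>F2span (insert g F). f x) = (\<Sum>x\<in>F2span F. f x) + (\<Sum>x\<in>(+) g ` F2span F. f x)"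
    unfolding F2span_insert by (intro sum.union_disjoint) auto
  then show ?thesis
    by (simp add: sum.reindex)
qed

lemma card_F2span_insert: "g \<notin> F2span F \<Longrightarrow> card (F2span (insert g F)) = 2 * card (F2span F)"
  using sum_F2span_insert[of g F "\<lambda>_. 1 :: nat"] by simp

definition code_support :: "(bit ^ 'n) set \<Rightarrow> 'n set" where
  "code_support C = (\<Union>c\<in>C. supp c)"

lemma code_support_F2span_insert:
  "code_support (F2span (insert g F)) = code_support (F2span F) \<union> supp g"
proof -
  have "supp g \<subseteq> code_support (F2span (insert g F))"
    unfolding code_support_def using F2span_base by blast
  moreover have "code_support ((+) g ` F2span F) \<subseteq> code_support (F2span F) \<union> supp g"
    unfolding code_support_def using supp_add_subset by blast
  ultimately show ?thesis
    unfolding F2span_insert code_support_def by blast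
qed

section \<open>Coset weights\<close>

definition coset_wt :: "(bit ^ 'n::finite) set \<Rightarrow> bit ^ 'n \<Rightarrow> nat" where
  "coset_wt C y = Min ((\<lambda>c. hweight (y + c)) ` C)"

lemma coset_weight_coset: "coset_weight ((+) y ` C) = coset_wt C y"
  by (simp add: coset_weight_def coset_wt_def image_image)

lemma coset_wt_le: "c \<in> C \<Longrightarrow> coset_wt C y \<le> hweight (y + c)"
  unfolding coset_wt_def by (rule Min_le) auto

lemma coset_wt_attained:
  assumes "C \<noteq> {}"
  shows "\<exists>c\<in>C. coset_wt C y = hweight (y + c)"
proof -
  have "coset_wt C y \<in> (\<lambda>c. hweight (y + c)) ` C"
    unfolding coset_wt_def by (rule Min_in) (use assms in auto)
  then show ?thesis
    by auto
qed

lemma coset_wt_singleton_0 [simp]: "coset_wt {0} y = hweight y"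
  by (simp add: coset_wt_def)

lemma coset_add_member:
  fixes C :: "(bit ^ 'n) set"
  assumes "vec.subspace C" and "c \<in> C"
  shows "(+) (y + c) ` C = (+) y ` C"
proof
  show "(+) (y + c) ` C \<subseteq> (+) y ` C"
    using vec.subspace_add[OF assms(1) assms(2)] by (auto simp: add.assoc)
  show "(+) y ` C \<subseteq> (+) (y + c) ` C"
  proof
    fix x assume "x \<in> (+) y ` C"
    then obtain c' where "c' \<in> C" and "x = y + c'"
      by blast
    moreover have "y + c' = (y + c) + (c + c')"
      by (simp only: add.assoc vec_bit_add_cancel_left)
    ultimately show "x \<in> (+) (y + c) ` C"
      using vec.subspace_add[OF assms] by blast
  qed
qed

lemma coset_wt_add_le:
  assumes "C \<noteq> {}"
  shows "coset_wt C (y + h) \<le> coset_wt C y + hweight h"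
proof -
  obtain c where "c \<in> C" and c: "coset_wt C y = hweight (y + c)"
    using coset_wt_attained[OF assms] by blast
  then have "coset_wt C (y + h) \<le> hweight ((y + c) + h)"
    using coset_wt_le by (metis add.assoc add.commute)
  also have "\<dots> \<le> coset_wt C y + hweight h"
    unfolding c by (rule hweight_add_le)
  finally show ?thesis .
qed

lemma card_mult_Q_eq_sum_coset_wt:
  assumes "vec.subspace C"
  shows "real (card C) * Q C lam = (\<Sum>y\<in>UNIV. lam ^ coset_wt C y)"
proof -
  let ?coset = "\<lambda>y. (+) y ` C"
  have coset_eq_iff: "?coset x = ?coset y \<longleftrightarrow> x \<in> ?coset y" for x y
  proof
    have "x \<in> ?coset x"
      using vec.subspace_0[OF assms] by (metis add_0_right image_eqI)
    then show "?coset x = ?coset y \<Longrightarrow> x \<in> ?coset y"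
      by simp
    show "x \<in> ?coset y \<Longrightarrow> ?coset x = ?coset y"
      using coset_add_member[OF assms] by blast
  qed
  have "(\<Sum>y\<in>UNIV. lam ^ coset_wt C y)
      = (\<Sum>A\<in>range ?coset. \<Sum>x\<in>{x\<in>UNIV. ?coset x = A}. lam ^ coset_wt C x)"
    by (rule sum.image_gen) simp
  also have "\<dots> = (\<Sum>A\<in>range ?coset. real (card C) * lam ^ coset_weight A)"
  proof (rule sum.cong[OF refl])
    fix A assume "A \<in> range ?coset"
    then obtain y where A: "A = ?coset y"
      by blast
    have "(\<Sum>x\<in>{x\<in>UNIV. ?coset x = A}. lam ^ coset_wt C x) = (\<Sum>x\<in>A. lam ^ coset_weight A)"
      using A coset_eq_iff by (intro sum.cong) (auto simp: coset_add_member[OF assms] simp flip: coset_weight_coset)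
    then show "(\<Sum>x\<in>{x\<in>UNIV. ?coset x = A}. lam ^ coset_wt C x) = real (card C) * lam ^ coset_weight A"
      using A by (simp add: card_image)
  qed
  also have "\<dots> = real (card C) * Q C lam"
    by (simp add: Q_def cosets_def sum_distrib_left full_SetCompr_eq)
  finally show ?thesis ..
qed

section \<open>The general bound\<close>

definition weight_enum :: "(bit ^ 'n::finite) set \<Rightarrow> real \<Rightarrow> real" where
  "weight_enum C lam = (\<Sum>c\<in>C. lam ^ hweight c)"

lemma weight_enum_UNIV: "weight_enum (UNIV :: (bit ^ 'n::finite) set) lam = (1 + lam) ^ CARD('n)"
  using sum_vecs_on_pow_hweight[of lam "UNIV :: 'n set"] by (simp add: weight_enum_def)

lemma sum_shift_UNIV: "(\<Sum>y\<in>UNIV. f (y + c)) = (\<Sum>y\<in>UNIV. f y)" for c :: "bit ^ 'n::finite"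
  by (rule sum.reindex_bij_witness[of _ "\<lambda>y. y + c" "\<lambda>y. y + c"]) (auto simp: add.assoc)

lemma sum_coset_wt_mult_weight_enum_le:
  fixes C :: "(bit ^ 'n::finite) set"
  assumes C: "vec.subspace C" and lam: "0 \<le> lam" "lam \<le> 1"
  shows "(\<Sum>y\<in>UNIV. lam ^ coset_wt C y) * weight_enum C lam \<le> real (card C) * (1 + lam) ^ CARD('n)"
proof -
  have "lam ^ coset_wt C y * weight_enum C lam \<le> (\<Sum>c\<in>C. lam ^ hweight (y + c))" for y
  proof -
    obtain c0 where "c0 \<in> C" and c0: "coset_wt C y = hweight (y + c0)"
      using coset_wt_attained vec.subspace_0[OF C] by blast
    have "lam ^ coset_wt C y * weight_enum C lam = (\<Sum>c\<in>C. lam ^ (hweight (y + c0) + hweight c))"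
      by (simp add: weight_enum_def c0 sum_distrib_left power_add)
    also have "\<dots> \<le> (\<Sum>c\<in>C. lam ^ hweight (y + (c0 + c)))"
      using lam hweight_add_le[of "y + c0"] by (intro sum_mono power_decreasing) (auto simp: add.assoc)
    also have "\<dots> = (\<Sum>c\<in>C. lam ^ hweight (y + c))"
      using coset_add_member[OF C \<open>c0 \<in> C\<close>, of 0]
      by (intro sum.reindex_bij_betw bij_betw_imageI) (auto simp: inj_on_def)
    finally show ?thesis .
  qed
  then have "(\<Sum>y\<in>UNIV. lam ^ coset_wt C y) * weight_enum C lam
      \<le> (\<Sum>y\<in>UNIV. \<Sum>c\<in>C. lam ^ hweight (y + c))"
    by (simp add: sum_distrib_right sum_mono)
  also have "\<dots> = (\<Sum>c\<in>C. \<Sum>y\<in>UNIV. lam ^ hweight (y + c))"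
    by (rule sum.swap)
  also have "\<dots> = (\<Sum>c\<in>C. weight_enum (UNIV :: (bit ^ 'n) set) lam)"
    unfolding weight_enum_def by (rule sum.cong[OF refl]) (rule sum_shift_UNIV)
  finally show ?thesis
    by (simp add: weight_enum_UNIV)
qed

lemma weight_enum_F2span_insert_ge:
  assumes "g \<notin> F2span F" and "hweight g \<le> w" and lam: "0 \<le> lam" "lam \<le> 1"
  shows "weight_enum (F2span F) lam * (1 + lam ^ w) \<le> weight_enum (F2span (insert g F)) lam"
proof -
  have "hweight (g + c) \<le> w + hweight c" for c
    using hweight_add_le[of g c] assms(2) by simp
  then have "(\<Sum>c\<in>F2span F. lam ^ w * lam ^ hweight c) \<le> (\<Sum>c\<in>F2span F. lam ^ hweight (g + c))"
    using lam by (intro sum_mono) (simp add: power_decreasing flip: power_add)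
  then show ?thesis
    by (simp add: weight_enum_def sum_F2span_insert[OF assms(1)] algebra_simps sum_distrib_left sum.distrib)
qed

lemma weight_enum_F2span_ge:
  fixes G :: "(bit ^ 'n::finite) set"
  assumes G: "\<forall>g\<in>G. hweight g \<le> w" and w: "1 \<le> w" and lam: "0 \<le> lam" "lam \<le> 1"
  shows "(1 + lam ^ w) powr (card (code_support (F2span G)) / w) \<le> weight_enum (F2span G) lam"
  using finite[of G] G
proof (induction G rule: finite_induct)
  case empty
  then show ?case
    by (simp add: F2span_empty code_support_def weight_enum_def)
next
  case (insert g F)
  let ?D = "F2span F" and ?s = "\<lambda>D. real (card (code_support D))"
  have IH: "(1 + lam ^ w) powr (?s ?D / w) \<le> weight_enum ?D lam"
    using insert by simp
  show ?case
  proof (cases "g \<in> ?D")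
    case True
    then show ?thesis
      using IH by (simp add: F2span_insert_redundant)
  next
    case False
    have "?s (F2span (insert g F)) \<le> ?s ?D + w"
      using card_Un_le[of "code_support ?D" "supp g"] insert.prems
      by (simp add: code_support_F2span_insert hweight_def)
    then have "(1 + lam ^ w) powr (?s (F2span (insert g F)) / w) \<le> (1 + lam ^ w) powr ((?s ?D + w) / w)"
      using lam by (intro powr_mono divide_right_mono) auto
    also have "\<dots> = (1 + lam ^ w) powr (?s ?D / w) * (1 + lam ^ w)"
      using w lam by (simp add: add_divide_distrib powr_add add_pos_nonneg)
    also have "\<dots> \<le> weight_enum ?D lam * (1 + lam ^ w)"
      using IH lam by (intro mult_right_mono) auto
    also have "\<dots> \<le> weight_enum (F2span (insert g F)) lam"
      using False insert.prems lam by (intro weight_enum_F2span_insert_ge) auto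
    finally show ?thesis .
  qed
qed

lemma Q_F2span_le:
  fixes G :: "(bit ^ 'n::finite) set"
  assumes w: "1 \<le> w" and G: "\<forall>g\<in>G. hweight g \<le> w"
    and full: "code_support (F2span G) = UNIV" and lam: "0 \<le> lam" "lam \<le> 1"
  shows "Q (F2span G) lam \<le> ((1 + lam) ^ w / (1 + lam ^ w)) powr (CARD('n) / w)"
proof -
  let ?C = "F2span G" and ?W = "(1 + lam ^ w) powr (CARD('n) / w)"
  have pos: "0 < 1 + lam ^ w"
    using lam by (simp add: add_pos_nonneg)
  have "0 < card ?C"
    using F2span_nonempty by (simp add: card_gt_0_iff)
  then have "Q ?C lam * weight_enum ?C lam \<le> (1 + lam) ^ CARD('n)"
    using sum_coset_wt_mult_weight_enum_le[OF subspace_F2span lam, of G]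
    by (simp add: card_mult_Q_eq_sum_coset_wt[OF subspace_F2span, symmetric] mult.assoc)
  moreover have "Q ?C lam * ?W \<le> Q ?C lam * weight_enum ?C lam"
    using weight_enum_F2span_ge[OF G w lam] full lam
    by (intro mult_left_mono) (auto simp: Q_def intro: sum_nonneg)
  moreover have "0 < ?W"
    using pos by simp
  ultimately have "Q ?C lam \<le> (1 + lam) ^ CARD('n) / ?W"
    by (simp add: pos_le_divide_eq)
  also have "(1 + lam) ^ CARD('n) = (1 + lam) powr (w * (CARD('n) / w))"
    using w lam by (simp add: powr_realpow)
  also have "\<dots> = ((1 + lam) ^ w) powr (CARD('n) / w)"
    using lam by (simp add: powr_powr flip: powr_realpow)
  finally show ?thesis
    using lam pos by (simp add: powr_divide)
qed

section \<open>Adding a generator\<close>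

definition min_binomial_sum :: "real \<Rightarrow> nat \<Rightarrow> nat \<Rightarrow> nat \<Rightarrow> real" where
  "min_binomial_sum lam m a b = (\<Sum>j\<le>m. real (m choose j) * lam ^ min (a + j) (b + (m - j)))"

definition merge_bound :: "real \<Rightarrow> nat \<Rightarrow> real \<Rightarrow> bool" where
  "merge_bound beta w lam \<longleftrightarrow> (\<forall>m a b. m \<le> w \<longrightarrow> a \<le> b + (w - m) \<longrightarrow> b \<le> a + (w - m) \<longrightarrow>
     min_binomial_sum lam m a b \<le> beta ^ m * (lam ^ a + lam ^ b))"

lemma min_binomial_sum_commute: "min_binomial_sum lam m a b = min_binomial_sum lam m b a"
  unfolding min_binomial_sum_def
  by (rule sum.reindex_bij_witness[of _ "\<lambda>j. m - j" "\<lambda>j. m - j"])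
     (auto simp: binomial_symmetric[symmetric] min.commute)

lemma min_binomial_sum_add: "min_binomial_sum lam m (k + a) (k + b) = lam ^ k * min_binomial_sum lam m a b"
proof -
  have "min (k + a + j) (k + b + (m - j)) = k + min (a + j) (b + (m - j))" for j
    by (simp add: min_def)
  then show ?thesis
    unfolding min_binomial_sum_def sum_distrib_left
    by (intro sum.cong refl) (simp only: power_add mult.left_commute)
qed

lemma merge_boundI:
  assumes base: "\<And>m d. 1 \<le> m \<Longrightarrow> m + d \<le> w \<Longrightarrow>
      min_binomial_sum lam m 0 d \<le> beta ^ m * (1 + lam ^ d)"
    and lam: "0 \<le> lam"
  shows "merge_bound beta w lam"
proof -
  have le: "min_binomial_sum lam m a b \<le> beta ^ m * (lam ^ a + lam ^ b)"
    if "a \<le> b" "m + (b - a) \<le> w" for m a b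
  proof -
    have "min_binomial_sum lam m 0 (b - a) \<le> beta ^ m * (1 + lam ^ (b - a))"
    proof (cases "m = 0")
      case True
      then show ?thesis
        using lam by (simp add: min_binomial_sum_def)
    next
      case False
      then show ?thesis
        using base that(2) by simp
    qed
    then have "lam ^ a * min_binomial_sum lam m 0 (b - a) \<le> lam ^ a * (beta ^ m * (1 + lam ^ (b - a)))"
      using lam by (simp add: mult_left_mono)
    moreover have "a + (b - a) = b"
      using that(1) by simp
    ultimately show ?thesis
      using min_binomial_sum_add[of lam m a 0 "b - a"]
      by (simp add: algebra_simps flip: power_add)
  qed
  show ?thesis
    unfolding merge_bound_def
  proof (intro allI impI)
    fix m a b assume "m \<le> w" "a \<le> b + (w - m)" "b \<le> a + (w - m)"
    then show "min_binomial_sum lam m a b \<le> beta ^ m * (lam ^ a + lam ^ b)"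
      using le[of a b m] le[of b a m] min_binomial_sum_commute[of lam m a b]
      by (cases "a \<le> b") (simp_all add: add.commute)
  qed
qed

lemma coset_wt_F2span_insert:
  "coset_wt (F2span (insert g F)) y = min (coset_wt (F2span F) y) (coset_wt (F2span F) (y + g))"
proof -
  have "(\<lambda>c. hweight (y + c)) ` (+) g ` F2span F = (\<lambda>c. hweight (y + g + c)) ` F2span F"
    by (auto simp: image_image add_ac)
  then show ?thesis
    unfolding coset_wt_def F2span_insert image_Un by (simp add: Min_Un F2span_nonempty)
qed

lemma coset_wt_add_vecs_on:
  assumes "D \<noteq> {}" and "D \<subseteq> vecs_on (- P)" and "u \<in> vecs_on (- P)" and "v \<in> vecs_on P"
  shows "coset_wt D (u + v) = coset_wt D u + hweight v"
proof -
  have "hweight (u + v + c) = hweight (u + c) + hweight v" if "c \<in> D" for c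
    using assms(2-4) that add_vecs_on[of u "- P" c] hweight_add_vecs_on[of "u + c" P v]
    by (auto simp: add_ac)
  then have "coset_wt D (u + v) = (MIN c\<in>D. hweight (u + c) + hweight v)"
    unfolding coset_wt_def by (intro arg_cong[where f = Min] image_cong) auto
  then show ?thesis
    using assms(1) by (simp add: Min_add_commute coset_wt_def)
qed

lemma sum_coset_wt_split:
  fixes D :: "(bit ^ 'n::finite) set" and lam :: real
  assumes "D \<noteq> {}" and "D \<subseteq> vecs_on (- P)"
  shows "(\<Sum>y\<in>UNIV. lam ^ coset_wt D y) = (\<Sum>u\<in>vecs_on (- P). lam ^ coset_wt D u) * (1 + lam) ^ card P"
proof -
  have "(\<Sum>y\<in>UNIV. lam ^ coset_wt D y) = (\<Sum>u\<in>vecs_on (- P). \<Sum>v\<in>vecs_on P. lam ^ coset_wt D (u + v))"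
    by (rule sum_UNIV_split_vecs_on)
  also have "\<dots> = (\<Sum>u\<in>vecs_on (- P). lam ^ coset_wt D u * (\<Sum>v\<in>vecs_on P. lam ^ hweight v))"
    using assms by (simp add: coset_wt_add_vecs_on power_add sum_distrib_left)
  finally show ?thesis
    by (simp add: sum_vecs_on_pow_hweight sum_distrib_right)
qed

lemma coset_wt_F2span_insert_vecs_on:
  assumes D: "F2span F \<subseteq> vecs_on (- P)" and h: "h \<in> vecs_on (- P)"
    and u: "u \<in> vecs_on (- P)" and v: "v \<in> vecs_on P"
  shows "coset_wt (F2span (insert (h + ones_on P) F)) (u + v)
    = min (coset_wt (F2span F) u + hweight v) (coset_wt (F2span F) (u + h) + (card P - hweight v))"
proof -
  let ?wt = "coset_wt (F2span F)"
  note D0 = F2span_nonempty[of F]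
  have "v + ones_on P \<in> vecs_on P"
    using v by (intro add_vecs_on) (auto simp: vecs_on_def)
  have "?wt (u + v + (h + ones_on P)) = ?wt ((u + h) + (v + ones_on P))"
    by (simp add: add_ac)
  also have "\<dots> = ?wt (u + h) + hweight (v + ones_on P)"
    by (rule coset_wt_add_vecs_on[OF D0 D add_vecs_on[OF u h] \<open>v + ones_on P \<in> vecs_on P\<close>])
  finally have "?wt (u + v + (h + ones_on P)) = ?wt (u + h) + (card P - hweight v)"
    using hweight_add_ones_on[OF v] by simp
  then show ?thesis
    by (simp only: coset_wt_F2span_insert coset_wt_add_vecs_on[OF D0 D u v])
qed

lemma sum_coset_wt_insert_le:
  fixes F :: "(bit ^ 'n::finite) set"
  assumes merge: "merge_bound beta w lam"
    and D: "F2span F \<subseteq> vecs_on (- P)" and h: "h \<in> vecs_on (- P)" and w: "hweight h + card P \<le> w"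
  shows "(\<Sum>y\<in>UNIV. lam ^ coset_wt (F2span (insert (h + ones_on P) F)) y)
    \<le> 2 * beta ^ card P * (\<Sum>u\<in>vecs_on (- P). lam ^ coset_wt (F2span F) u)"
proof -
  let ?g = "h + ones_on P" and ?m = "card P" and ?wt = "coset_wt (F2span F)"
  note D0 = F2span_nonempty[of F]
  have "(\<Sum>v\<in>vecs_on P. lam ^ coset_wt (F2span (insert ?g F)) (u + v))
      \<le> beta ^ ?m * (lam ^ ?wt u + lam ^ ?wt (u + h))" if u: "u \<in> vecs_on (- P)" for u
  proof -
    have "?wt (u + h) \<le> ?wt u + (w - ?m)" "?wt u \<le> ?wt (u + h) + (w - ?m)"
      using coset_wt_add_le[OF D0, of u h] coset_wt_add_le[OF D0, of "u + h" h] w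
      by (simp_all add: add.assoc)
    then have merged: "min_binomial_sum lam ?m (?wt u) (?wt (u + h)) \<le> beta ^ ?m * (lam ^ ?wt u + lam ^ ?wt (u + h))"
      using merge w unfolding merge_bound_def by simp
    have "(\<Sum>v\<in>vecs_on P. lam ^ coset_wt (F2span (insert ?g F)) (u + v))
        = (\<Sum>v\<in>vecs_on P. lam ^ min (?wt u + hweight v) (?wt (u + h) + (?m - hweight v)))"
      using coset_wt_F2span_insert_vecs_on[OF D h u] by simp
    also have "\<dots> = min_binomial_sum lam ?m (?wt u) (?wt (u + h))"
      unfolding min_binomial_sum_def
      by (rule sum_vecs_on_hweight[where f = "\<lambda>j. lam ^ min (?wt u + j) (?wt (u + h) + (?m - j))"])
    finally show ?thesis
      using merged by simp
  qed
  then have "(\<Sum>y\<in>UNIV. lam ^ coset_wt (F2span (insert ?g F)) y)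
      \<le> (\<Sum>u\<in>vecs_on (- P). beta ^ ?m * (lam ^ ?wt u + lam ^ ?wt (u + h)))"
    unfolding sum_UNIV_split_vecs_on[of _ P] by (rule sum_mono)
  also have "\<dots> = beta ^ ?m *
      ((\<Sum>u\<in>vecs_on (- P). lam ^ ?wt u) + (\<Sum>u\<in>vecs_on (- P). lam ^ ?wt (u + h)))"
    by (simp add: distrib_left sum.distrib flip: sum_distrib_left)
  also have "(\<Sum>u\<in>vecs_on (- P). lam ^ ?wt (u + h)) = (\<Sum>u\<in>vecs_on (- P). lam ^ ?wt u)"
    using h by (intro sum.reindex_bij_witness[of _ "\<lambda>u. u + h" "\<lambda>u. u + h"])
      (auto simp: add.assoc add_vecs_on)
  finally show ?thesis
    by simp
qed

lemma F2span_insert_new_support: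
  fixes g :: "bit ^ 'n::finite" and F :: "(bit ^ 'n) set"
  defines "P \<equiv> supp g - code_support (F2span F)"
  shows "F2span F \<subseteq> vecs_on (- P)"
    and "g + ones_on P \<in> vecs_on (- P)"
    and "hweight (g + ones_on P) + card P = hweight g"
    and "card (code_support (F2span (insert g F))) = card (code_support (F2span F)) + card P"
proof -
  show "F2span F \<subseteq> vecs_on (- P)"
    unfolding P_def code_support_def vecs_on_def by auto
  show h: "g + ones_on P \<in> vecs_on (- P)"
    by (auto simp: P_def vecs_on_def supp_def ones_on_def)
  have "g = (g + ones_on P) + ones_on P"
    by (simp add: add.assoc)
  then show "hweight (g + ones_on P) + card P = hweight g"
    using hweight_add_vecs_on[OF h, of "ones_on P"] by (simp add: vecs_on_def)
  have "code_support (F2span (insert g F)) = code_support (F2span F) \<union> P"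
    unfolding code_support_F2span_insert P_def by blast
  moreover have "code_support (F2span F) \<inter> P = {}"
    unfolding P_def by blast
  ultimately show "card (code_support (F2span (insert g F))) = card (code_support (F2span F)) + card P"
    by (simp add: card_Un_disjoint)
qed

lemma sum_coset_wt_F2span_le:
  fixes G :: "(bit ^ 'n::finite) set" and beta lam :: real
  assumes merge: "merge_bound beta w lam" and lam: "0 \<le> lam" and beta: "0 \<le> beta"
    and G: "\<forall>g\<in>G. hweight g \<le> w"
  shows "(\<Sum>y\<in>UNIV. lam ^ coset_wt (F2span G) y)
    \<le> card (F2span G) * beta ^ card (code_support (F2span G))
        * (1 + lam) ^ (CARD('n) - card (code_support (F2span G)))"
  using finite[of G] G
proof (induction G rule: finite_induct)
  case empty
  then show ?case
    using weight_enum_UNIV[of lam, where 'n = 'n] by (simp add: F2span_empty code_support_def weight_enum_def)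
next
  case (insert g F)
  let ?D = "F2span F" and ?D' = "F2span (insert g F)"
  let ?s = "card (code_support ?D)" and ?s' = "card (code_support ?D')"
  have IH: "(\<Sum>y\<in>UNIV. lam ^ coset_wt ?D y) \<le> card ?D * beta ^ ?s * (1 + lam) ^ (CARD('n) - ?s)"
    using insert by simp
  show ?case
  proof (cases "g \<in> ?D")
    case True
    then show ?thesis
      using IH by (simp add: F2span_insert_redundant)
  next
    case False
    define P where "P = supp g - code_support ?D"
    note new = F2span_insert_new_support[where g = g and F = F, folded P_def]
    let ?X = "\<Sum>u\<in>vecs_on (- P). lam ^ coset_wt ?D u"
    have "?s' \<le> CARD('n)"
      by (rule card_mono) auto
    then have n: "CARD('n) - ?s = (CARD('n) - ?s') + card P"
      using new(4) by simp
    have "?X * (1 + lam) ^ card P = (\<Sum>y\<in>UNIV. lam ^ coset_wt ?D y)"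
      by (rule sum_coset_wt_split[OF F2span_nonempty new(1), symmetric])
    also have "\<dots> \<le> card ?D * beta ^ ?s * (1 + lam) ^ (CARD('n) - ?s)"
      by (rule IH)
    also have "\<dots> = (card ?D * beta ^ ?s * (1 + lam) ^ (CARD('n) - ?s')) * (1 + lam) ^ card P"
      by (simp add: n power_add)
    finally have X: "?X \<le> card ?D * beta ^ ?s * (1 + lam) ^ (CARD('n) - ?s')"
      using lam by simp
    have "hweight (g + ones_on P) + card P \<le> w"
      using new(3) insert.prems by simp
    then have "(\<Sum>y\<in>UNIV. lam ^ coset_wt ?D' y) \<le> 2 * beta ^ card P * ?X"
      using sum_coset_wt_insert_le[OF merge new(1,2)] by (simp add: add.assoc)
    also have "\<dots> \<le> 2 * beta ^ card P * (card ?D * beta ^ ?s * (1 + lam) ^ (CARD('n) - ?s'))"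
      using X beta by (intro mult_left_mono) auto
    also have "\<dots> = card ?D' * beta ^ ?s' * (1 + lam) ^ (CARD('n) - ?s')"
      using card_F2span_insert[OF False] new(4) by (simp add: power_add)
    finally show ?thesis .
  qed
qed

lemma Q_F2span_le_of_merge_bound:
  fixes G :: "(bit ^ 'n::finite) set"
  assumes merge: "merge_bound (B powr (1 / w)) w lam" and lam: "0 \<le> lam" and B: "0 < B"
    and G: "\<forall>g\<in>G. hweight g \<le> w" and full: "code_support (F2span G) = UNIV"
  shows "Q (F2span G) lam \<le> B powr (CARD('n) / w)"
proof -
  have "real (card (F2span G)) * Q (F2span G) lam \<le> card (F2span G) * (B powr (1 / w)) ^ CARD('n)"
    using sum_coset_wt_F2span_le[OF merge lam _ G] B full by (simp add: card_mult_Q_eq_sum_coset_wt[OF subspace_F2span])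
  moreover have "0 < card (F2span G)"
    using F2span_nonempty by (simp add: card_gt_0_iff)
  ultimately have "Q (F2span G) lam \<le> (B powr (1 / w)) ^ CARD('n)"
    by simp
  also have "\<dots> = B powr (CARD('n) / w)"
    using B by (simp add: powr_power)
  finally show ?thesis .
qed

section \<open>Weights three and four\<close>

lemma le_powr_root_mult_if_eq_add:
  fixes B x y r :: real
  assumes "B ^ m * y ^ w = x ^ w + r" and "0 \<le> r" "0 \<le> y" "0 < B" "0 < w"
  shows "x \<le> (B powr (1 / w)) ^ m * y"
proof -
  let ?beta = "B powr (1 / w)"
  have "0 \<le> ?beta ^ m * y"
    using assms by simp
  moreover have "x \<le> ?beta ^ m * y" if "0 < x"
  proof -
    have "(?beta ^ m * y) ^ w = B ^ m * y ^ w"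
      using assms by (simp add: power_mult_distrib powr_power powr_realpow flip: power_mult)
    then have "x ^ Suc (w - 1) \<le> (?beta ^ m * y) ^ Suc (w - 1)"
      using assms by simp
    then show ?thesis
      by (rule power_le_imp_le_base) (use assms in simp)
  qed
  ultimately show ?thesis
    by fastforce
qed

text \<open>
  Up to a factor 2 when \<open>d = 0\<close>, the left-hand sides below and in \<open>fourth_root_bounds\<close>
  are the values of \<open>min_binomial_sum l m 0 d\<close> for \<open>1 \<le> m\<close>, \<open>m + d \<le> w\<close>. The nontrivial
  bounds \<open>x \<le> beta ^ m * y\<close> are certified by identities \<open>B ^ m * y ^ w = x ^ w + r\<close> with
  \<open>r\<close> visibly nonnegative on \<open>[0, 1]\<close>.
\<close>

lemma cube_root_bounds:
  fixes l :: real
  assumes l: "0 \<le> l" "l \<le> 1"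
  defines "B \<equiv> 1 + 3 * l"
  defines "beta \<equiv> B powr (1 / 3)"
  shows "beta ^ 3 = B" and "1 \<le> beta" and "1 + l \<le> beta * (1 + l)"
    and "1 + l \<le> beta ^ 1 * (1 + l ^ 2)"
    and "1 + l \<le> beta ^ 2 * 1"
    and "1 + 3 * l \<le> beta ^ 2 * (1 + l)"
proof -
  have "0 < B"
    using l by (simp add: B_def)
  then show "beta ^ 3 = B"
    by (simp add: beta_def powr_power)
  show "1 \<le> beta"
    using l by (simp add: beta_def B_def ge_one_powr_ge_zero)
  then show "1 + l \<le> beta * (1 + l)"
    using mult_right_mono[of 1 beta "1 + l"] l by simp
  have root: "x \<le> beta ^ m * y" if "B ^ m * y ^ 3 = x ^ 3 + r" "0 \<le> r" "0 \<le> y" for x y r m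
    using le_powr_root_mult_if_eq_add[OF that \<open>0 < B\<close>] by (simp add: beta_def)
  note nonneg = l mult_nonneg_nonneg add_nonneg_nonneg
  show "1 + l \<le> beta ^ 1 * (1 + l ^ 2)"
  proof (rule root)
    show "B ^ 1 * (1 + l ^ 2) ^ 3 = (1 + l) ^ 3 + l ^ 3 * (8 + 3 * l + 9 * l ^ 2 + l ^ 3 + 3 * l ^ 4)"
      unfolding B_def by algebra
  qed (use nonneg in auto)
  show "1 + l \<le> beta ^ 2 * 1"
  proof (rule root)
    show "B ^ 2 * 1 ^ 3 = (1 + l) ^ 3 + (l * (3 + 5 * l) + l ^ 2 * (1 - l))"
      unfolding B_def power_one mult_1_right by algebra
  qed (use nonneg in auto)
  show "1 + 3 * l \<le> beta ^ 2 * (1 + l)"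
  proof (rule root)
    show "B ^ 2 * (1 + l) ^ 3 = (1 + 3 * l) ^ 3 + (1 + 3 * l) ^ 2 * l ^ 2 * (3 + l)"
      unfolding B_def by algebra
  qed (use nonneg in auto)
qed

lemma merge_bound_3:
  fixes l :: real
  assumes l: "0 \<le> l" "l \<le> 1"
  shows "merge_bound ((1 + 3 * l) powr (1 / 3)) 3 l"
proof (rule merge_boundI[OF _ l(1)])
  define beta where "beta = (1 + 3 * l) powr (1 / 3)"
  fix m d :: nat assume "1 \<le> m" "m + d \<le> 3"
  then have "(m, d) \<in> {(1, 0), (1, 1), (1, 2), (2, 0), (2, 1), (3, 0)}"
    by simp arith
  then show "min_binomial_sum l m 0 d \<le> beta ^ m * (1 + l ^ d)"
    using cube_root_bounds[OF l, folded beta_def] by (auto simp: min_binomial_sum_def eval_nat_numeral)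
qed

lemma fourth_root_bounds:
  fixes l :: real
  assumes l: "0 \<le> l" "l \<le> 1"
  defines "B \<equiv> 1 + 4 * l + 6 * l ^ 2"
  defines "beta \<equiv> B powr (1 / 4)"
  shows "beta ^ 4 = B" and "1 \<le> beta" and "1 + l \<le> beta * (1 + l)"
    and "1 + l \<le> beta ^ 1 * (1 + l ^ 2)"
    and "1 + l \<le> beta ^ 1 * (1 + l ^ 3)"
    and "1 + l \<le> beta ^ 2 * 1"
    and "1 + 3 * l \<le> beta ^ 2 * (1 + l)"
    and "1 + 2 * l + l ^ 2 \<le> beta ^ 2 * (1 + l ^ 2)"
    and "1 + 3 * l \<le> beta ^ 3 * 1"
    and "1 + 4 * l + 3 * l ^ 2 \<le> beta ^ 3 * (1 + l)"
proof -
  have "0 < B"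
    using l by (simp add: B_def add_pos_nonneg)
  then show "beta ^ 4 = B"
    by (simp add: beta_def powr_power)
  show "1 \<le> beta"
    using l by (simp add: beta_def B_def ge_one_powr_ge_zero)
  then show "1 + l \<le> beta * (1 + l)"
    using mult_right_mono[of 1 beta "1 + l"] l by simp
  have root: "x \<le> beta ^ m * y" if "B ^ m * y ^ 4 = x ^ 4 + r" "0 \<le> r" "0 \<le> y" for x y r m
    using le_powr_root_mult_if_eq_add[OF that \<open>0 < B\<close>] by (simp add: beta_def)
  note nonneg = l \<open>0 < B\<close> mult_nonneg_nonneg add_nonneg_nonneg
  show "1 + l \<le> beta ^ 1 * (1 + l ^ 2)"
  proof (rule root)
    show "B ^ 1 * (1 + l ^ 2) ^ 4 = (1 + l) ^ 4 + l ^ 2 * (4 + 12 * l + 29 * l ^ 2 + 24 * l ^ 3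
        + 40 * l ^ 4 + 16 * l ^ 5 + 25 * l ^ 6 + 4 * l ^ 7 + 6 * l ^ 8)"
      unfolding B_def by algebra
  qed (use nonneg in auto)
  show "1 + l \<le> beta ^ 1 * (1 + l ^ 3)"
  proof (rule root)
    show "B ^ 1 * (1 + l ^ 3) ^ 4 = (1 + l) ^ 4 + l ^ 4 * (15 + 24 * l + 6 * l ^ 2 + 24 * l ^ 3
        + 36 * l ^ 4 + 4 * l ^ 5 + 16 * l ^ 6 + 24 * l ^ 7 + l ^ 8 + 4 * l ^ 9 + 6 * l ^ 10)"
      unfolding B_def by algebra
  qed (use nonneg in auto)
  show "1 + l \<le> beta ^ 2 * 1"
  proof (rule root)
    show "B ^ 2 * 1 ^ 4 = (1 + l) ^ 4 + l * (2 + 5 * l) * (B + (1 + l) ^ 2)"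
      unfolding B_def power_one mult_1_right by algebra
  qed (use nonneg in auto)
  show "1 + 3 * l \<le> beta ^ 2 * (1 + l)"
  proof (rule root)
    show "B ^ 2 * (1 + l) ^ 4 = (1 + 3 * l) ^ 4
        + l ^ 2 * (6 + 16 * l + 6 * l ^ 2) * (B * (1 + l) ^ 2 + (1 + 3 * l) ^ 2)"
      unfolding B_def by algebra
  qed (use nonneg in auto)
  show "1 + 2 * l + l ^ 2 \<le> beta ^ 2 * (1 + l ^ 2)"
  proof (rule root)
    show "B ^ 2 * (1 + l ^ 2) ^ 4 = (1 + 2 * l + l ^ 2) ^ 4
        + l ^ 2 * (2 + 4 * l + 12 * l ^ 2 + 4 * l ^ 3 + 6 * l ^ 4) * (B * (1 + l ^ 2) ^ 2 + (1 + l) ^ 4)"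
      unfolding B_def by algebra
  qed (use nonneg in auto)
  show "1 + 3 * l \<le> beta ^ 3 * 1"
  proof (rule root)
    show "B ^ 3 * 1 ^ 4 = (1 + 3 * l) ^ 4 + l ^ 2 * (12 + 100 * l + 315 * l ^ 2 + 432 * l ^ 3 + 216 * l ^ 4)"
      unfolding B_def power_one mult_1_right by algebra
  qed (use nonneg in auto)
  show "1 + 4 * l + 3 * l ^ 2 \<le> beta ^ 3 * (1 + l)"
  proof (rule root)
    show "B ^ 3 * (1 + l) ^ 4 = (1 + 4 * l + 3 * l ^ 2) ^ 4
        + (1 + l) ^ 4 * l ^ 2 * (12 + 100 * l + 315 * l ^ 2 + 432 * l ^ 3 + 216 * l ^ 4)"
      unfolding B_def by algebra
  qed (use nonneg in auto)
qed

lemma merge_bound_4: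
  fixes l :: real
  assumes l: "0 \<le> l" "l \<le> 1"
  shows "merge_bound ((1 + 4 * l + 6 * l ^ 2) powr (1 / 4)) 4 l"
proof (rule merge_boundI[OF _ l(1)])
  define beta where "beta = (1 + 4 * l + 6 * l ^ 2) powr (1 / 4)"
  fix m d :: nat assume "1 \<le> m" "m + d \<le> 4"
  then have "(m, d) \<in> {(1, 0), (1, 1), (1, 2), (1, 3), (2, 0), (2, 1), (2, 2), (3, 0), (3, 1), (4, 0)}"
    by simp arith
  then show "min_binomial_sum l m 0 d \<le> beta ^ m * (1 + l ^ d)"
    using fourth_root_bounds[OF l, folded beta_def] by (auto simp: min_binomial_sum_def eval_nat_numeral)
qed

theorem theorem3:
  fixes C :: "(bit ^ 'n::finite) set" and w :: nat
  assumes "w \<ge> 1"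
    and "\<exists>G. C = F2span G \<and> (\<forall>g\<in>G. hweight g \<le> w)"
    and "(\<Union>c\<in>C. supp c) = UNIV"
  shows "(\<forall>lam::real. 0 \<le> lam \<and> lam \<le> 1 \<longrightarrow>
           Q C lam \<le> ((1 + lam) ^ w / (1 + lam ^ w)) powr (real CARD('n) / real w))
      \<and> (w = 3 \<longrightarrow> (\<forall>lam::real. 0 \<le> lam \<and> lam \<le> 1 \<longrightarrow>
           Q C lam \<le> (1 + 3 * lam) powr (real CARD('n) / 3)))
      \<and> (w = 4 \<longrightarrow> (\<forall>lam::real. 0 \<le> lam \<and> lam \<le> 1 \<longrightarrow>
           Q C lam \<le> (1 + 4 * lam + 6 * lam^2) powr (real CARD('n) / 4)))"
proof -
  obtain G where C: "C = F2span G" and G: "\<forall>g\<in>G. hweight g \<le> w"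
    using assms(2) by blast
  have full: "code_support (F2span G) = UNIV"
    using assms(3) by (simp add: C code_support_def)
  have "Q C lam \<le> ((1 + lam) ^ w / (1 + lam ^ w)) powr (CARD('n) / w)"
    if "0 \<le> lam" "lam \<le> 1" for lam :: real
    using Q_F2span_le[OF assms(1) G full that] by (simp add: C)
  moreover have "Q C lam \<le> (1 + 3 * lam) powr (CARD('n) / 3)"
    if "w = 3" "0 \<le> lam" "lam \<le> 1" for lam :: real
    using Q_F2span_le_of_merge_bound[OF _ that(2) _ G full] merge_bound_3[OF that(2,3)] that
    by (simp add: C add_pos_nonneg)
  moreover have "Q C lam \<le> (1 + 4 * lam + 6 * lam ^ 2) powr (CARD('n) / 4)"
    if "w = 4" "0 \<le> lam" "lam \<le> 1" for lam :: real
    using Q_F2span_le_of_merge_bound[OF _ that(2) _ G full] merge_bound_4[OF that(2,3)] that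
    by (simp add: C add_pos_nonneg)
  ultimately show ?thesis
    by blast
qed

end
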